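(* Let $(m,n)$ be coprime positive integers, $\gamma\in D_{m,n}$, and $(r_h,r_v)\in O(\gamma)$, where $r_h$ is the horizontal step ending at $(a,b)$ and $r_v$ is the vertical step starting at $(a',b')$. Then: (1) $l(a-1,b)$ intersects $r_v$ if and only if $-n< n(a'-a)-m(b'-b)< m-n$; (2) $l(a',b'+1)$ intersects $r_h$ if and only if $m-n< n(a'-a)-m(b'-b)< m$. In particular the conditions in (1) and (2) cannot hold simultaneously. Moreover, $(r_h,r_v)\in H(\gamma)$ if and only if $l(a-1,b)$ intersects $r_v$ or $l(a',b'+1)$ intersects $r_h$.
   Context: An $(m,n)$-Dyck path is a lattice path from $(0,0)$ to $(m,n)$ of $m$ horizontal unit steps $(1,0)$ and $n$ vertical unit steps $(0,1)$ lying weakly above $y=(n/m)x$; $D_{m,n}$ is the set of them. For a point $p$, $l(p)$ denotes the line through $p$ parallel to $y=(n/m)x$ (a "parallel line"). Steps are regarded as closed unit segments. $O(\gamma)$ is the set of pairs $(r_h,r_v)$ with $r_h$ a horizontal step and $r_v$ a vertical step of $\gamma$, $r_v$ appearing after $r_h$ along $\gamma$; $H(\gamma)$ is the set of pairs in $O(\gamma)$ for which some parallel line intersects both $r_h$ and $r_v$. *)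

theory Defs
  imports "HOL-Analysis.Analysis"
begin

text \<open>A lattice path is a list of unit steps: H = (1,0), V = (0,1).\<close>
datatype step = H | V

definition pt :: "step list \<Rightarrow> nat \<Rightarrow> int \<times> int" where
  "pt \<gamma> k = (int (length (filter (\<lambda>s. s = H) (take k \<gamma>))),
              int (length (filter (\<lambda>s. s = V) (take k \<gamma>))))"

definition rpt :: "int \<times> int \<Rightarrow> real \<times> real" where
  "rpt p = (of_int (fst p), of_int (snd p))"

text \<open>(m,n)-Dyck paths: m horizontal and n vertical steps, every lattice point
  of the path weakly above y = (n/m) x (i.e. n x \<le> m y).\<close>
definition dyck_path :: "nat \<Rightarrow> nat \<Rightarrow> step list \<Rightarrow> bool" where
  "dyck_path m n \<gamma> \<longleftrightarrow>
     length (filter (\<lambda>s. s = H) \<gamma>) = m \<and> length (filter (\<lambda>s. s = V) \<gamma>) = n \<and>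
     (\<forall>k \<le> length \<gamma>. int n * fst (pt \<gamma> k) \<le> int m * snd (pt \<gamma> k))"

definition D :: "nat \<Rightarrow> nat \<Rightarrow> step list set" where
  "D m n = {\<gamma>. dyck_path m n \<gamma>}"

definition step_seg :: "step list \<Rightarrow> nat \<Rightarrow> (real \<times> real) set" where
  "step_seg \<gamma> i = closed_segment (rpt (pt \<gamma> i)) (rpt (pt \<gamma> (Suc i)))"

definition par_line :: "nat \<Rightarrow> nat \<Rightarrow> real \<times> real \<Rightarrow> (real \<times> real) set" where
  "par_line m n p = {q. real n * (fst q - fst p) = real m * (snd q - snd p)}"

definition O_set :: "step list \<Rightarrow> (nat \<times> nat) set" where
  "O_set \<gamma> = {(i, j). i < j \<and> j < length \<gamma> \<and> \<gamma> ! i = H \<and> \<gamma> ! j = V}"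

definition H_set :: "nat \<Rightarrow> nat \<Rightarrow> step list \<Rightarrow> (nat \<times> nat) set" where
  "H_set m n \<gamma> = {(i, j) \<in> O_set \<gamma>. \<exists>p. par_line m n p \<inter> step_seg \<gamma> i \<noteq> {} \<and>
                                           par_line m n p \<inter> step_seg \<gamma> j \<noteq> {}}"

end

theory Submission
  imports Defs
begin

text \<open>Everything reduces to the linear functional \<open>g(x,y) = n x - m y\<close>, which is constant
  on each parallel line. A parallel line meets a step iff its \<open>g\<close>-value lies between the
  values at the step's endpoints; for a horizontal step ending at \<open>(a,b)\<close> these are
  \<open>g(a,b) - n, g(a,b)\<close>, for a vertical step starting at \<open>(a',b')\<close> they are
  \<open>g(a',b') - m, g(a',b')\<close>. With \<open>d = g(a',b') - g(a,b)\<close> the three statements become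
  closed-interval conditions on \<open>d\<close>. The endpoints \<open>d \<in> {-n, m-n, m}\<close> are excluded by
  coprimality: each yields \<open>n x = m y\<close> with \<open>0 < x \<le> m\<close>, hence \<open>(x,y) = (m,n)\<close>, which is
  incompatible with the positions of the two steps in an \<open>(m,n)\<close>-Dyck path.\<close>

lemma closed_segment_meets_level_iff:
  fixes A B :: "real \<times> real" and \<alpha> \<beta> c :: real
  assumes "\<alpha> * fst A + \<beta> * snd A \<le> \<alpha> * fst B + \<beta> * snd B"
  shows "(\<exists>q\<in>closed_segment A B. \<alpha> * fst q + \<beta> * snd q = c) \<longleftrightarrow>
         \<alpha> * fst A + \<beta> * snd A \<le> c \<and> c \<le> \<alpha> * fst B + \<beta> * snd B"
proof -
  define gA where "gA = \<alpha> * fst A + \<beta> * snd A"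
  define gB where "gB = \<alpha> * fst B + \<beta> * snd B"
  have le: "gA \<le> gB" using assms by (simp add: gA_def gB_def)
  have val: "\<alpha> * fst ((1 - u) *\<^sub>R A + u *\<^sub>R B) + \<beta> * snd ((1 - u) *\<^sub>R A + u *\<^sub>R B)
      = (1 - u) * gA + u * gB" for u
    by (simp add: gA_def gB_def algebra_simps)
  show ?thesis unfolding gA_def[symmetric] gB_def[symmetric]
  proof
    assume "\<exists>q\<in>closed_segment A B. \<alpha> * fst q + \<beta> * snd q = c"
    then obtain q where "q \<in> closed_segment A B" "\<alpha> * fst q + \<beta> * snd q = c" by blast
    then obtain u where u: "0 \<le> u" "u \<le> 1" and c: "c = (1 - u) * gA + u * gB"
      unfolding closed_segment_def using val by auto
    have "u * gA \<le> u * gB" "(1 - u) * gA \<le> (1 - u) * gB"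
      using u le by (auto intro: mult_left_mono)
    then show "gA \<le> c \<and> c \<le> gB" using c by (auto simp: algebra_simps)
  next
    assume c: "gA \<le> c \<and> c \<le> gB"
    define u where "u = (if gA = gB then 0 else (c - gA) / (gB - gA))"
    have u: "0 \<le> u" "u \<le> 1" using c le by (auto simp: u_def field_simps)
    have "(1 - u) * gA + u * gB = c" using c le by (auto simp: u_def field_simps)
    then show "\<exists>q\<in>closed_segment A B. \<alpha> * fst q + \<beta> * snd q = c"
      using u val unfolding closed_segment_def
      by (intro bexI[of _ "(1 - u) *\<^sub>R A + u *\<^sub>R B"]) auto
  qed
qed

lemma par_line_meets_iff:
  "par_line m n p \<inter> S \<noteq> {} \<longleftrightarrow>
   (\<exists>q\<in>S. real n * fst q + (- real m) * snd q = real n * fst p - real m * snd p)"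
  unfolding par_line_def by (auto simp: algebra_simps)

lemma rpt_linear [simp]:
  "real n * fst (rpt (x, y)) - real m * snd (rpt (x, y)) = real_of_int (int n * x - int m * y)"
  by (simp add: rpt_def)

lemma pt_Suc:
  assumes "k < length \<gamma>"
  shows "pt \<gamma> (Suc k) = (if \<gamma> ! k = H then (fst (pt \<gamma> k) + 1, snd (pt \<gamma> k))
                                      else (fst (pt \<gamma> k), snd (pt \<gamma> k) + 1))"
  using assms by (cases "\<gamma> ! k") (auto simp: pt_def take_Suc_conv_app_nth)

lemma pt_mono:
  assumes "k \<le> l"
  shows "fst (pt \<gamma> k) \<le> fst (pt \<gamma> l) \<and> snd (pt \<gamma> k) \<le> snd (pt \<gamma> l)"
proof -
  have "take l \<gamma> = take k \<gamma> @ drop k (take l \<gamma>)"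
    using assms by (metis append_take_drop_id min.absorb1 take_take)
  then show ?thesis unfolding pt_def
    by (metis (no_types, lifting) filter_append fst_conv le_add1 length_append of_nat_le_iff snd_conv)
qed

lemma par_line_meets_H_step_iff:
  assumes "k < length \<gamma>" "\<gamma> ! k = H" "pt \<gamma> (Suc k) = (x, y)"
  shows "par_line m n p \<inter> step_seg \<gamma> k \<noteq> {} \<longleftrightarrow>
    real_of_int (int n * (x - 1) - int m * y) \<le> real n * fst p - real m * snd p \<and>
    real n * fst p - real m * snd p \<le> real_of_int (int n * x - int m * y)"
proof -
  have "pt \<gamma> k = (x - 1, y)" using pt_Suc[OF assms(1)] assms(2,3) by auto
  then have "par_line m n p \<inter> step_seg \<gamma> k \<noteq> {} \<longleftrightarrow>
    (\<exists>q\<in>closed_segment (rpt (x - 1, y)) (rpt (x, y)).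
       real n * fst q + (- real m) * snd q = real n * fst p - real m * snd p)"
    unfolding par_line_meets_iff step_seg_def assms(3) by simp
  also have "\<dots> \<longleftrightarrow>
      real n * fst (rpt (x - 1, y)) + (- real m) * snd (rpt (x - 1, y)) \<le> real n * fst p - real m * snd p \<and>
      real n * fst p - real m * snd p \<le> real n * fst (rpt (x, y)) + (- real m) * snd (rpt (x, y))"
    by (rule closed_segment_meets_level_iff) (simp add: rpt_def algebra_simps)
  finally show ?thesis by (simp add: rpt_def algebra_simps)
qed

lemma par_line_meets_V_step_iff:
  assumes "k < length \<gamma>" "\<gamma> ! k = V" "pt \<gamma> k = (x, y)"
  shows "par_line m n p \<inter> step_seg \<gamma> k \<noteq> {} \<longleftrightarrow>
    real_of_int (int n * x - int m * (y + 1)) \<le> real n * fst p - real m * snd p \<and>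
    real n * fst p - real m * snd p \<le> real_of_int (int n * x - int m * y)"
proof -
  have "pt \<gamma> (Suc k) = (x, y + 1)" using pt_Suc[OF assms(1)] assms(2,3) by auto
  then have "par_line m n p \<inter> step_seg \<gamma> k \<noteq> {} \<longleftrightarrow>
    (\<exists>q\<in>closed_segment (rpt (x, y + 1)) (rpt (x, y)).
       real n * fst q + (- real m) * snd q = real n * fst p - real m * snd p)"
    unfolding par_line_meets_iff step_seg_def assms(3) closed_segment_commute[of "rpt (x, y)"]
    by simp
  also have "\<dots> \<longleftrightarrow>
      real n * fst (rpt (x, y + 1)) + (- real m) * snd (rpt (x, y + 1)) \<le> real n * fst p - real m * snd p \<and>
      real n * fst p - real m * snd p \<le> real n * fst (rpt (x, y)) + (- real m) * snd (rpt (x, y))"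
    by (rule closed_segment_meets_level_iff) (simp add: rpt_def algebra_simps)
  finally show ?thesis by (simp add: rpt_def algebra_simps)
qed

lemma O_set_step_bounds:
  assumes "\<gamma> \<in> D m n" "(i, j) \<in> O_set \<gamma>" "pt \<gamma> (Suc i) = (a, b)" "pt \<gamma> j = (a', b')"
  shows "1 \<le> a" "0 \<le> b" "a \<le> a'" "b \<le> b'" "a' \<le> int m" "b' + 1 \<le> int n"
    and "int n * a \<le> int m * b"
proof -
  from assms(2) have ij: "i < j" "j < length \<gamma>" "\<gamma> ! i = H" "\<gamma> ! j = V"
    by (auto simp: O_set_def)
  from assms(1) have dyck: "length (filter (\<lambda>s. s = H) \<gamma>) = m"
    "length (filter (\<lambda>s. s = V) \<gamma>) = n"
    "\<And>k. k \<le> length \<gamma> \<Longrightarrow> int n * fst (pt \<gamma> k) \<le> int m * snd (pt \<gamma> k)"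
    by (auto simp: D_def dyck_path_def)
  have "pt \<gamma> i = (a - 1, b)" using pt_Suc[of i \<gamma>] ij assms(3) by (auto split: if_splits)
  then show "1 \<le> a" "0 \<le> b" using pt_mono[of 0 i \<gamma>] by (auto simp: pt_def)
  show "a \<le> a'" "b \<le> b'" using pt_mono[of "Suc i" j \<gamma>] assms(3,4) ij by auto
  have "pt \<gamma> (Suc j) = (a', b' + 1)" using pt_Suc[OF ij(2)] ij assms(4) by auto
  moreover have "pt \<gamma> (length \<gamma>) = (int m, int n)" using dyck by (simp add: pt_def)
  ultimately show "a' \<le> int m" "b' + 1 \<le> int n"
    using pt_mono[of "Suc j" "length \<gamma>" \<gamma>] ij by auto
  show "int n * a \<le> int m * b" using dyck(3)[of "Suc i"] ij assms(3) by auto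
qed

lemma coprime_line_lattice_point:
  fixes m n :: nat and x y :: int
  assumes "coprime m n" "0 < x" "x \<le> int m" "int n * x = int m * y"
  shows "x = int m \<and> y = int n"
proof -
  have "int m dvd int n * x" using assms(4) by simp
  then have "int m dvd x" using assms(1) by (simp add: coprime_dvd_mult_right_iff)
  then have "x = int m" using assms(2,3) zdvd_imp_le by fastforce
  then show ?thesis using assms(2,4) by (simp add: mult.commute)
qed

lemma dyck_offset_ne:
  fixes m n :: nat and a b a' b' :: int
  assumes "coprime m n"
    and "1 \<le> a" "0 \<le> b" "a \<le> a'" "b \<le> b'" "a' \<le> int m" "b' + 1 \<le> int n"
    and "int n * a \<le> int m * b"
  defines "d \<equiv> int n * (a' - a) - int m * (b' - b)"
  shows "d \<noteq> - int n" "d \<noteq> int m - int n" "d \<noteq> int m"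
proof -
  show "d \<noteq> - int n"
    using coprime_line_lattice_point[OF assms(1), of "a' - a + 1" "b' - b"] assms(2-7)
    by (auto simp: d_def algebra_simps)
  show "d \<noteq> int m - int n"
  proof
    assume "d = int m - int n"
    then have "int n * (a' - a + 1) = int m * (b' - b + 1)" by (simp add: d_def algebra_simps)
    then have "a' - a + 1 = int m" "b' - b + 1 = int n"
      using coprime_line_lattice_point[OF assms(1), of "a' - a + 1"] assms(2-7) by auto
    \<comment> \<open>so the horizontal step runs from \<open>(0,0)\<close> to \<open>(1,0)\<close>, below the line\<close>
    then have "a = 1" "b = 0" using assms(2-7) by auto
    then show False using assms(3,5,7,8) by simp
  qed
  show "d \<noteq> int m"
  proof
    assume "d = int m"
    then have e: "int n * (a' - a) = int m * (b' - b + 1)" by (simp add: d_def algebra_simps)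
    have "0 < int m * (b' - b + 1)" using assms(2,4,5,6) by (intro mult_pos_pos) linarith+
    then have "0 < int n * (a' - a)" using e by simp
    then have "0 < a' - a" by (simp add: zero_less_mult_iff)
    then show False using coprime_line_lattice_point[OF assms(1) _ _ e] assms(2,6) by simp
  qed
qed

lemma H_set_iff_offset:
  assumes "(i, j) \<in> O_set \<gamma>" "pt \<gamma> (Suc i) = (a, b)" "pt \<gamma> j = (a', b')"
  shows "(i, j) \<in> H_set m n \<gamma> \<longleftrightarrow>
           - int n \<le> int n * (a' - a) - int m * (b' - b) \<and>
           int n * (a' - a) - int m * (b' - b) \<le> int m"
proof -
  from assms(1) have "i < length \<gamma>" "\<gamma> ! i = H" "j < length \<gamma>" "\<gamma> ! j = V"
    by (auto simp: O_set_def)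
  note meets_i = par_line_meets_H_step_iff[OF this(1,2) assms(2)]
   and meets_j = par_line_meets_V_step_iff[OF this(3,4) assms(3)]
  show ?thesis
  proof
    assume "(i, j) \<in> H_set m n \<gamma>"
    then obtain p where "par_line m n p \<inter> step_seg \<gamma> i \<noteq> {}" "par_line m n p \<inter> step_seg \<gamma> j \<noteq> {}"
      by (auto simp: H_set_def)
    then have "real_of_int (int n * (a - 1) - int m * b) \<le> real_of_int (int n * a' - int m * b')"
      "real_of_int (int n * a' - int m * (b' + 1)) \<le> real_of_int (int n * a - int m * b)"
      unfolding meets_i meets_j by linarith+
    then show "- int n \<le> int n * (a' - a) - int m * (b' - b) \<and>
               int n * (a' - a) - int m * (b' - b) \<le> int m"
      unfolding of_int_le_iff by (auto simp: algebra_simps)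
  next
    assume "- int n \<le> int n * (a' - a) - int m * (b' - b) \<and>
            int n * (a' - a) - int m * (b' - b) \<le> int m"
    then have lo: "- int n \<le> int n * (a' - a) - int m * (b' - b)"
      and hi: "int n * (a' - a) - int m * (b' - b) \<le> int m" by simp_all
    \<comment> \<open>the line through \<open>(a-1,b)\<close> or the one through \<open>(a',b'+1)\<close> meets both steps\<close>
    consider "int n * (a' - a) - int m * (b' - b) \<le> int m - int n"
      | "int m - int n \<le> int n * (a' - a) - int m * (b' - b)"
      by linarith
    then have "\<exists>p. par_line m n p \<inter> step_seg \<gamma> i \<noteq> {} \<and> par_line m n p \<inter> step_seg \<gamma> j \<noteq> {}"
    proof cases
      case 1
      have "par_line m n (rpt (a - 1, b)) \<inter> step_seg \<gamma> i \<noteq> {}"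
        "par_line m n (rpt (a - 1, b)) \<inter> step_seg \<gamma> j \<noteq> {}"
        unfolding meets_i meets_j rpt_linear of_int_le_iff using 1 lo by (auto simp: algebra_simps)
      then show ?thesis by blast
    next
      case 2
      have "par_line m n (rpt (a', b' + 1)) \<inter> step_seg \<gamma> i \<noteq> {}"
        "par_line m n (rpt (a', b' + 1)) \<inter> step_seg \<gamma> j \<noteq> {}"
        unfolding meets_i meets_j rpt_linear of_int_le_iff using 2 hi by (auto simp: algebra_simps)
      then show ?thesis by blast
    qed
    then show "(i, j) \<in> H_set m n \<gamma>" using assms(1) by (simp add: H_set_def)
  qed
qed

theorem lemma3p8:
  fixes m n :: nat and \<gamma> :: "step list" and i j :: nat and a b a' b' :: int
  assumes "0 < m" and "0 < n" and "coprime m n"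
    and "\<gamma> \<in> D m n"
    and "(i, j) \<in> O_set \<gamma>"
    and "pt \<gamma> (Suc i) = (a, b)"
    and "pt \<gamma> j = (a', b')"
  shows "(par_line m n (rpt (a - 1, b)) \<inter> step_seg \<gamma> j \<noteq> {} \<longleftrightarrow>
            - int n < int n * (a' - a) - int m * (b' - b) \<and>
            int n * (a' - a) - int m * (b' - b) < int m - int n)
       \<and> (par_line m n (rpt (a', b' + 1)) \<inter> step_seg \<gamma> i \<noteq> {} \<longleftrightarrow>
            int m - int n < int n * (a' - a) - int m * (b' - b) \<and>
            int n * (a' - a) - int m * (b' - b) < int m)
       \<and> \<not> (par_line m n (rpt (a - 1, b)) \<inter> step_seg \<gamma> j \<noteq> {} \<and>
             par_line m n (rpt (a', b' + 1)) \<inter> step_seg \<gamma> i \<noteq> {})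
       \<and> ((i, j) \<in> H_set m n \<gamma> \<longleftrightarrow>
            par_line m n (rpt (a - 1, b)) \<inter> step_seg \<gamma> j \<noteq> {} \<or>
            par_line m n (rpt (a', b' + 1)) \<inter> step_seg \<gamma> i \<noteq> {})"
proof -
  from assms(5) have "i < length \<gamma>" "\<gamma> ! i = H" "j < length \<gamma>" "\<gamma> ! j = V"
    by (auto simp: O_set_def)
  note meets_i = par_line_meets_H_step_iff[OF this(1,2) assms(6)]
   and meets_j = par_line_meets_V_step_iff[OF this(3,4) assms(7)]
  define d where "d = int n * (a' - a) - int m * (b' - b)"
  have "d \<noteq> - int n" "d \<noteq> int m - int n" "d \<noteq> int m"
    using dyck_offset_ne[OF assms(3) O_set_step_bounds[OF assms(4-7)]] by (simp_all add: d_def)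
  moreover have "par_line m n (rpt (a - 1, b)) \<inter> step_seg \<gamma> j \<noteq> {} \<longleftrightarrow>
      - int n \<le> d \<and> d \<le> int m - int n"
    unfolding meets_j rpt_linear of_int_le_iff d_def by (auto simp: algebra_simps)
  moreover have "par_line m n (rpt (a', b' + 1)) \<inter> step_seg \<gamma> i \<noteq> {} \<longleftrightarrow>
      int m - int n \<le> d \<and> d \<le> int m"
    unfolding meets_i rpt_linear of_int_le_iff d_def by (auto simp: algebra_simps)
  ultimately show ?thesis
    unfolding H_set_iff_offset[OF assms(5-7)] d_def[symmetric] by auto
qed

end
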